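(* In an inverse problem, fix data $y_k$ and let $P_{k-1},Q_{k-1}\in\bar{\mathcal{P}}_k(\mathcal{X})\cap\mathcal{P}_1(\mathcal{X})$. Assume $$\frac{\mathbb{E}_{(X,X')\sim P_{k-1}\otimes Q_{k-1}}[d_{\mathcal{X}}(X,X')h(y_k,X)h(y_k,X')]}{\mathbb{E}_{X\sim P_{k-1}}[h(y_k,X)]\,\mathbb{E}_{X\sim Q_{k-1}}[h(y_k,X)]}\le\sup_{x_0\in\mathcal{X}}\Big|\mathbb{E}_{X\sim P_{k-1}}[d_{\mathcal{X}}(X,x_0)]-\mathbb{E}_{X\sim Q_{k-1}}[d_{\mathcal{X}}(X,x_0)]\Big|.$$ Then $P_k=F_k(P_{k-1})$ and $Q_k^*=F_k(Q_{k-1})$ satisfy $W_1(P_k,Q_k^* )\le W_1(P_{k-1},Q_{k-1})$.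
   Context: $(\mathcal{X},d_{\mathcal{X}})$ is a Polish metric space; the likelihood $x\mapsto h(y_k,x)\ge0$ is measurable. For a Borel probability measure $\mu$ on $\mathcal{X}$, $Z_k(\mu)=\int h(y_k,x)\mu(dx)$ and $F_k\mu(dx)=h(y_k,x)\mu(dx)/Z_k(\mu)$. $\bar{\mathcal{P}}_k(\mathcal{X})=\{\mu:0<Z_k(\mu)<\infty\}$; $\mathcal{P}_1(\mathcal{X})$ is the set of probability measures with finite first moment; $W_1$ is the 1-Wasserstein distance w.r.t. $d_{\mathcal{X}}$; $P\otimes Q$ denotes the product measure. *)

theory Defs
  imports "HOL-Probability.Probability"
begin

definition borel_prob :: "'a::metric_space measure \<Rightarrow> bool" where
  "borel_prob P \<longleftrightarrow> prob_space P \<and> sets P = sets borel"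

definition finite_first_moment :: "'a::metric_space measure \<Rightarrow> bool" where
  "finite_first_moment P \<longleftrightarrow> (\<exists>x0. (\<integral>\<^sup>+ x. ennreal (dist x x0) \<partial>P) < \<infinity>)"

definition couplings :: "'a::metric_space measure \<Rightarrow> 'a measure \<Rightarrow> ('a \<times> 'a) measure set" where
  "couplings P Q = {C. prob_space C \<and> sets C = sets (borel \<Otimes>\<^sub>M borel)
      \<and> distr C borel fst = P \<and> distr C borel snd = Q}"

definition W1 :: "'a::metric_space measure \<Rightarrow> 'a measure \<Rightarrow> ennreal" where
  "W1 P Q = (INF C \<in> couplings P Q. \<integral>\<^sup>+ z. ennreal (dist (fst z) (snd z)) \<partial>C)"

text \<open>Normalising constant Z_k(mu) = int h(y_k,x) mu(dx), with h = h(y_k, \<cdot>) (may be \<infinity>).\<close>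
definition Zk :: "('a \<Rightarrow> real) \<Rightarrow> 'a measure \<Rightarrow> ennreal" where
  "Zk h \<mu> = (\<integral>\<^sup>+ x. ennreal (h x) \<partial>\<mu>)"

definition barP :: "('a::metric_space \<Rightarrow> real) \<Rightarrow> 'a measure set" where
  "barP h = {\<mu>. borel_prob \<mu> \<and> 0 < Zk h \<mu> \<and> Zk h \<mu> < \<infinity>}"

definition Fk :: "('a \<Rightarrow> real) \<Rightarrow> 'a measure \<Rightarrow> 'a measure" where
  "Fk h \<mu> = density \<mu> (\<lambda>x. ennreal (h x) / Zk h \<mu>)"

end

theory Submission
  imports Defs
begin

text \<open>The product of the two posteriors is a coupling of them, and its transport cost is exactly
  the left-hand side of the hypothesis. The right-hand side is in turn at most \<open>W\<^sub>1(P, Q)\<close>: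
  for every coupling of \<open>P\<close> and \<open>Q\<close>, the expectations of the 1-Lipschitz function
  \<open>d(\<cdot>, x\<^sub>0)\<close> under \<open>P\<close> and \<open>Q\<close> differ by at most the transport cost
  (the easy half of Kantorovich-Rubinstein duality).\<close>

lemma integrable_dist_of_finite_first_moment:
  fixes P :: "'a::metric_space measure"
  assumes "finite_measure P" "sets P = sets borel" "finite_first_moment P"
  shows "integrable P (\<lambda>x. dist x x0)"
proof -
  interpret finite_measure P by fact
  have meas: "(\<lambda>x. dist x y) \<in> borel_measurable P" for y
    unfolding measurable_cong_sets[OF assms(2) refl]
    by (intro borel_measurable_continuous_onI continuous_intros)
  obtain x1 where "(\<integral>\<^sup>+ x. ennreal (dist x x1) \<partial>P) < \<infinity>"
    using assms(3) by (auto simp: finite_first_moment_def)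
  then have "integrable P (\<lambda>x. dist x x1)"
    using meas by (simp add: integrable_iff_bounded)
  then have "integrable P (\<lambda>x. dist x x1 + dist x1 x0)"
    by simp
  then show ?thesis
    by (rule Bochner_Integration.integrable_bound) (auto simp: meas intro: dist_triangle)
qed

lemma lipschitz_on_dist_left: "1-lipschitz_on U (\<lambda>x. dist x a)"
proof (rule lipschitz_onI)
  show "dist (dist x a) (dist y a) \<le> 1 * dist x y" for x y
    using abs_dist_diff_le[of x a y] by (simp add: dist_real_def dist_commute)
qed simp

lemma lipschitz_integral_diff_le_W1:
  fixes f :: "'a::{metric_space, second_countable_topology} \<Rightarrow> real"
  assumes f: "1-lipschitz_on UNIV f" "integrable P f" "integrable Q f"
  shows "ennreal \<bar>(\<integral>x. f x \<partial>P) - (\<integral>x. f x \<partial>Q)\<bar> \<le> W1 P Q"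
  unfolding W1_def
proof (rule INF_greatest)
  fix C assume "C \<in> couplings P Q"
  then have sC: "sets C = sets (borel \<Otimes>\<^sub>M borel)"
    and P: "P = distr C borel fst" and Q: "Q = distr C borel snd"
    by (auto simp: couplings_def)
  have fst: "fst \<in> C \<rightarrow>\<^sub>M borel" and snd: "snd \<in> C \<rightarrow>\<^sub>M borel"
    and dist: "(\<lambda>z. dist (fst z) (snd z)) \<in> borel_measurable C"
    unfolding measurable_cong_sets[OF sC refl] by measurable
  have lip: "\<bar>f x - f y\<bar> \<le> dist x y" for x y
    using lipschitz_onD[OF f(1), of x y] by (simp add: dist_real_def)
  have f_meas: "f \<in> borel_measurable borel"
    using lipschitz_on_continuous_on[OF f(1)] by (rule borel_measurable_continuous_onI)
  have "integrable C (\<lambda>z. f (fst z))" "integrable C (\<lambda>z. f (snd z))"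
    using f(2,3) unfolding P Q
    by (simp_all add: integrable_distr_eq[OF fst f_meas] integrable_distr_eq[OF snd f_meas])
  then have diff: "(\<integral>x. f x \<partial>P) - (\<integral>x. f x \<partial>Q) = (\<integral>z. f (fst z) - f (snd z) \<partial>C)"
    unfolding P Q by (simp add: integral_distr[OF fst f_meas] integral_distr[OF snd f_meas])
  show "ennreal \<bar>(\<integral>x. f x \<partial>P) - (\<integral>x. f x \<partial>Q)\<bar> \<le> (\<integral>\<^sup>+ z. ennreal (dist (fst z) (snd z)) \<partial>C)"
  proof (cases "integrable C (\<lambda>z. dist (fst z) (snd z))")
    case True
    have "\<bar>\<integral>z. f (fst z) - f (snd z) \<partial>C\<bar> \<le> (\<integral>z. \<bar>f (fst z) - f (snd z)\<bar> \<partial>C)"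
      by (rule integral_abs_bound)
    also have "\<dots> \<le> (\<integral>z. dist (fst z) (snd z) \<partial>C)"
      using True \<open>integrable C (\<lambda>z. f (fst z))\<close> \<open>integrable C (\<lambda>z. f (snd z))\<close>
      by (intro integral_mono) (auto simp: lip)
    finally show ?thesis
      by (simp add: diff nn_integral_eq_integral[OF True])
  next
    case False
    then show ?thesis
      using dist by (simp add: integrable_iff_bounded less_top[symmetric])
  qed
qed

lemma pair_measure_in_couplings:
  assumes A: "borel_prob A" and B: "borel_prob B"
  shows "A \<Otimes>\<^sub>M B \<in> couplings A B"
proof -
  interpret A: prob_space A using A by (simp add: borel_prob_def)
  interpret B: prob_space B using B by (simp add: borel_prob_def)
  interpret AB: pair_prob_space A B ..
  have sA: "sets A = sets borel" and sB: "sets B = sets borel"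
    using A B by (auto simp: borel_prob_def)
  have "distr (A \<Otimes>\<^sub>M B) borel fst = distr (A \<Otimes>\<^sub>M B) A fst"
    using sA by (intro distr_cong) auto
  also have "\<dots> = A"
    by (rule B.distr_pair_fst)
  finally have fst: "distr (A \<Otimes>\<^sub>M B) borel fst = A" .
  have "distr (A \<Otimes>\<^sub>M B) borel snd = distr (distr (B \<Otimes>\<^sub>M A) (A \<Otimes>\<^sub>M B) (\<lambda>(x, y). (y, x))) B snd"
    using sB by (subst AB.distr_pair_swap[symmetric]) (intro distr_cong, auto)
  also have "\<dots> = distr (B \<Otimes>\<^sub>M A) B fst"
    by (subst distr_distr) (auto simp: comp_def split_beta)
  also have "\<dots> = B"
    by (rule A.distr_pair_fst)
  finally have snd: "distr (A \<Otimes>\<^sub>M B) borel snd = B" .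
  show ?thesis
    using sets_pair_measure_cong[OF sA sB] fst snd AB.prob_space_axioms
    by (simp add: couplings_def)
qed

lemma barPD:
  assumes "P \<in> barP h"
  shows "prob_space P" "sets P = sets borel" "0 < Zk h P" "Zk h P < \<infinity>"
  using assms by (auto simp: barP_def borel_prob_def)

lemma borel_prob_Fk:
  assumes h: "h \<in> borel_measurable borel" and P: "P \<in> barP h"
  shows "borel_prob (Fk h P)"
proof -
  note sP = barPD(2)[OF P] and Z = barPD(3,4)[OF P]
  have h_P: "(\<lambda>x. ennreal (h x)) \<in> borel_measurable P"
    unfolding measurable_cong_sets[OF sP refl] using h by measurable
  have "emeasure (Fk h P) (space (Fk h P)) = (\<integral>\<^sup>+ x. ennreal (h x) \<partial>P) / Zk h P"
    using h_P by (simp add: Fk_def emeasure_density nn_integral_divide)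
  also have "\<dots> = 1"
    using Z by (simp add: Zk_def)
  finally show ?thesis
    using sP by (auto intro: prob_spaceI simp: borel_prob_def Fk_def)
qed

lemma nn_integral_pair_Fk:
  assumes h: "h \<in> borel_measurable borel" "\<And>x. h x \<ge> 0"
    and P: "P \<in> barP h" and Q: "Q \<in> barP h"
    and g: "g \<in> borel_measurable (borel \<Otimes>\<^sub>M borel)"
  shows "(\<integral>\<^sup>+ z. g z \<partial>(Fk h P \<Otimes>\<^sub>M Fk h Q))
    = (\<integral>\<^sup>+ z. ennreal (h (fst z) * h (snd z)) * g z \<partial>(P \<Otimes>\<^sub>M Q)) / (Zk h P * Zk h Q)"
proof -
  note sP = barPD(2)[OF P] and sQ = barPD(2)[OF Q] and ZP = barPD(3,4)[OF P] and ZQ = barPD(3,4)[OF Q]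
  have sPQ: "sets (P \<Otimes>\<^sub>M Q) = sets (borel \<Otimes>\<^sub>M borel)"
    by (rule sets_pair_measure_cong[OF sP sQ])
  have "sigma_finite_measure Q" "sigma_finite_measure (Fk h Q)"
    using barPD(1)[OF Q] borel_prob_Fk[OF h(1) Q]
    by (auto simp: borel_prob_def intro: prob_space_imp_sigma_finite)
  then have "Fk h P \<Otimes>\<^sub>M Fk h Q
      = density (P \<Otimes>\<^sub>M Q) (\<lambda>(x, y). ennreal (h x) / Zk h P * (ennreal (h y) / Zk h Q))"
    unfolding Fk_def using h(1)
    by (intro pair_measure_density)
      (simp_all add: measurable_cong_sets[OF sP refl] measurable_cong_sets[OF sQ refl])
  then have "(\<integral>\<^sup>+ z. g z \<partial>(Fk h P \<Otimes>\<^sub>M Fk h Q))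
      = (\<integral>\<^sup>+ z. ennreal (h (fst z) * h (snd z)) * g z * inverse (Zk h P * Zk h Q) \<partial>(P \<Otimes>\<^sub>M Q))"
    using h g ZP ZQ
    by (simp add: nn_integral_density measurable_cong_sets[OF sPQ refl] split_beta' divide_ennreal_def
        ennreal_inverse_mult ennreal_mult mult_ac)
  also have "\<dots> = (\<integral>\<^sup>+ z. ennreal (h (fst z) * h (snd z)) * g z \<partial>(P \<Otimes>\<^sub>M Q)) / (Zk h P * Zk h Q)"
    using h g by (simp add: nn_integral_multc measurable_cong_sets[OF sPQ refl] divide_ennreal_def)
  finally show ?thesis .
qed

theorem theorem5:
  fixes h :: "'a::polish_space \<Rightarrow> real"
    and P Q :: "'a measure"
  assumes h_meas: "h \<in> borel_measurable borel"
    and h_nonneg: "\<And>x. h x \<ge> 0"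
    and P: "P \<in> barP h" "finite_first_moment P"
    and Q: "Q \<in> barP h" "finite_first_moment Q"
    and cond: "(\<integral>\<^sup>+ z. ennreal (dist (fst z) (snd z) * h (fst z) * h (snd z)) \<partial>(P \<Otimes>\<^sub>M Q))
                  / (Zk h P * Zk h Q)
               \<le> (SUP x0. ennreal \<bar>(\<integral>x. dist x x0 \<partial>P) - (\<integral>x. dist x x0 \<partial>Q)\<bar>)"
  shows "W1 (Fk h P) (Fk h Q) \<le> W1 P Q"
proof -
  have "W1 (Fk h P) (Fk h Q) \<le> (\<integral>\<^sup>+ z. ennreal (dist (fst z) (snd z)) \<partial>(Fk h P \<Otimes>\<^sub>M Fk h Q))"
    unfolding W1_def
    by (intro INF_lower pair_measure_in_couplings borel_prob_Fk h_meas P(1) Q(1))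
  also have "\<dots> = (\<integral>\<^sup>+ z. ennreal (dist (fst z) (snd z) * h (fst z) * h (snd z)) \<partial>(P \<Otimes>\<^sub>M Q))
                  / (Zk h P * Zk h Q)"
    using h_nonneg by (simp add: nn_integral_pair_Fk[OF h_meas h_nonneg P(1) Q(1)] ennreal_mult mult_ac)
  also have "\<dots> \<le> (SUP x0. ennreal \<bar>(\<integral>x. dist x x0 \<partial>P) - (\<integral>x. dist x x0 \<partial>Q)\<bar>)"
    by (rule cond)
  also have "\<dots> \<le> W1 P Q"
    using P Q barPD(1,2)[OF P(1)] barPD(1,2)[OF Q(1)]
    by (intro SUP_least lipschitz_integral_diff_le_W1 lipschitz_on_dist_left
        integrable_dist_of_finite_first_moment) (auto simp: prob_space_def)
  finally show ?thesis .
qed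

end
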